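(* Let $\epsilon>0$, $y\in\mathbb R^d$, and for $i\in[k]$ let $a_i\in\mathbb R^d$ and $b_i>0$. Consider the feasibility problem of finding $\tilde y\in\mathbb R^d$ with $\|\tilde y-y\|_\infty\le\epsilon$ and $\|\tilde y-a_i\|_\infty\ge b_i$ for all $i\in[k]$. For $j\in[d]$ and $t\in\mathbb R$ let $S_j(t)=\{i\in[k]: |t-a_{i,j}|\ge b_i\}$. Then: (1) if $\tilde y$ satisfies $\|\tilde y-y\|_\infty\le\epsilon$ and $\bigcup_{j=1}^d S_j(\tilde y_j)=[k]$, then $\tilde y$ is a solution of the feasibility problem; (2) for $j\in[d]$ let $P_j=\bigcup_{i=1}^k\big(\{a_{i,j}-b_i,\,a_{i,j}+b_i\}\cap[y_j-\epsilon,y_j+\epsilon]\big)$, or $P_j=\{y_j\}$ if this set is empty, and let $P=\{p\in\mathbb R^d: p_j\in P_j \text{ for all } j\in[d]\}$; then if the feasibility problem has a solution, $P$ contains a solution. *)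

theory Defs
  imports "HOL-Analysis.Analysis"
begin

definition feasible_sol :: "real \<Rightarrow> real^'d \<Rightarrow> (nat \<Rightarrow> real^'d) \<Rightarrow> (nat \<Rightarrow> real) \<Rightarrow> nat \<Rightarrow> real^'d \<Rightarrow> bool" where
  "feasible_sol eps y a b k yt \<longleftrightarrow>
     infnorm (yt - y) \<le> eps \<and> (\<forall>i\<in>{1..k}. infnorm (yt - a i) \<ge> b i)"

definition S_set :: "(nat \<Rightarrow> real^'d) \<Rightarrow> (nat \<Rightarrow> real) \<Rightarrow> nat \<Rightarrow> 'd \<Rightarrow> real \<Rightarrow> nat set" where
  "S_set a b k j t = {i\<in>{1..k}. \<bar>t - a i $ j\<bar> \<ge> b i}"

definition P_coord :: "real \<Rightarrow> real^'d \<Rightarrow> (nat \<Rightarrow> real^'d) \<Rightarrow> (nat \<Rightarrow> real) \<Rightarrow> nat \<Rightarrow> 'd \<Rightarrow> real set" where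
  "P_coord eps y a b k j =
     (let Q = (\<Union>i\<in>{1..k}. {a i $ j - b i, a i $ j + b i} \<inter> {y $ j - eps .. y $ j + eps})
      in if Q = {} then {y $ j} else Q)"

definition P_grid :: "real \<Rightarrow> real^'d \<Rightarrow> (nat \<Rightarrow> real^'d) \<Rightarrow> (nat \<Rightarrow> real) \<Rightarrow> nat \<Rightarrow> (real^'d) set" where
  "P_grid eps y a b k = {p. \<forall>j. p $ j \<in> P_coord eps y a b k j}"

end

theory Submission
  imports Defs
begin

text \<open>Whether \<open>\<bar>t - a\<^sub>i\<^sub>j\<bar> \<ge> b\<^sub>i\<close> holds depends only on the position of \<open>t\<close> relative to the
breakpoints \<open>a\<^sub>i\<^sub>j \<plusminus> b\<^sub>i\<close>. Hence the sup-norm constraints are decided coordinatewise, which gives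
part (1), and each coordinate of a solution may be moved, within \<open>[y\<^sub>j - \<epsilon>, y\<^sub>j + \<epsilon>]\<close>, to a
breakpoint in that interval without crossing any other breakpoint, which gives part (2).\<close>

lemma infnorm_Max_cart: "infnorm (x::real^'n) = Max (range (\<lambda>i. \<bar>x$i\<bar>))"
proof -
  have "{\<bar>x$i\<bar> |i. i \<in> UNIV} = range (\<lambda>i. \<bar>x$i\<bar>)"
    by auto
  then show ?thesis
    unfolding infnorm_cart by (simp add: cSup_eq_Max)
qed

lemma infnorm_le_cart_iff: "infnorm (x::real^'n) \<le> e \<longleftrightarrow> (\<forall>i. \<bar>x$i\<bar> \<le> e)"
  unfolding infnorm_Max_cart by simp

lemma le_infnorm_cart_iff: "e \<le> infnorm (x::real^'n) \<longleftrightarrow> (\<exists>i. e \<le> \<bar>x$i\<bar>)"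
  unfolding infnorm_Max_cart by (simp add: Max_ge_iff)

definition in_closed_cell :: "real set \<Rightarrow> real \<Rightarrow> real \<Rightarrow> bool" where
  "in_closed_cell E t p \<longleftrightarrow> (\<forall>e\<in>E. e \<le> t \<longrightarrow> e \<le> p) \<and> (\<forall>e\<in>E. t \<le> e \<longrightarrow> p \<le> e)"

lemma in_closed_cell_abs_ge:
  assumes "in_closed_cell E t p" and "c - r \<in> E" and "c + r \<in> E" and "r \<le> \<bar>t - c\<bar>"
  shows "r \<le> \<bar>p - c\<bar>"
  using assms unfolding in_closed_cell_def by (smt (verit))

lemma in_closed_cell_if_disjoint:
  assumes "E \<inter> {lo..hi} = {}" and "t \<in> {lo..hi}" and "p \<in> {lo..hi}"
  shows "in_closed_cell E t p"
  using assms unfolding in_closed_cell_def by force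

lemma ex_in_closed_cell:
  assumes "finite E" and t: "t \<in> {lo..hi}" and "E \<inter> {lo..hi} \<noteq> {}"
  shows "\<exists>p\<in>E \<inter> {lo..hi}. in_closed_cell E t p"
proof (cases "E \<inter> {lo..t} = {}")
  case True
  define L where "L = E \<inter> {t..hi}"
  obtain x where "x \<in> E \<inter> {lo..hi}"
    using assms(3) by blast
  with True have "x \<in> L"
    unfolding L_def by auto
  then have "finite L" "L \<noteq> {}"
    using assms(1) unfolding L_def by auto
  then have "Min L \<in> L" and "\<And>e. e \<in> L \<Longrightarrow> Min L \<le> e"
    by auto
  then have "in_closed_cell E t (Min L)"
    unfolding in_closed_cell_def L_def by force
  with \<open>Min L \<in> L\<close> show ?thesis
    using t unfolding L_def by auto
next
  case False
  define L where "L = E \<inter> {lo..t}"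
  have "finite L" "L \<noteq> {}"
    using assms False unfolding L_def by auto
  then have "Max L \<in> L" and "\<And>e. e \<in> L \<Longrightarrow> e \<le> Max L"
    by auto
  then have "in_closed_cell E t (Max L)"
    unfolding in_closed_cell_def L_def by force
  with \<open>Max L \<in> L\<close> show ?thesis
    using t unfolding L_def by auto
qed

definition breakpoints :: "(nat \<Rightarrow> real^'d) \<Rightarrow> (nat \<Rightarrow> real) \<Rightarrow> nat \<Rightarrow> 'd \<Rightarrow> real set" where
  "breakpoints a b k j = (\<Union>i\<in>{1..k}. {a i $ j - b i, a i $ j + b i})"

lemma P_coord_eq:
  "P_coord eps y a b k j =
     (let Q = breakpoints a b k j \<inter> {y $ j - eps .. y $ j + eps} in if Q = {} then {y $ j} else Q)"
  unfolding P_coord_def breakpoints_def by simp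

lemma P_coord_subset:
  assumes "0 \<le> eps"
  shows "P_coord eps y a b k j \<subseteq> {y $ j - eps .. y $ j + eps}"
  using assms unfolding P_coord_eq Let_def by auto

lemma ex_P_coord_in_closed_cell:
  assumes "\<bar>t - y $ j\<bar> \<le> eps"
  shows "\<exists>p\<in>P_coord eps y a b k j. in_closed_cell (breakpoints a b k j) t p"
proof -
  let ?E = "breakpoints a b k j" and ?I = "{y $ j - eps .. y $ j + eps}"
  have t: "t \<in> ?I" and y: "y $ j \<in> ?I"
    using assms by auto
  show ?thesis
  proof (cases "?E \<inter> ?I = {}")
    case True
    then have "in_closed_cell ?E t (y $ j)"
      using t y by (rule in_closed_cell_if_disjoint)
    with True show ?thesis
      unfolding P_coord_eq by simp
  next
    case False
    have "finite ?E"
      unfolding breakpoints_def by simp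
    from ex_in_closed_cell[OF this t False] False show ?thesis
      unfolding P_coord_eq by simp
  qed
qed

lemma feasible_sol_if_S_set_cover:
  assumes "infnorm (yt - y) \<le> eps" and "(\<Union>j. S_set a b k j (yt $ j)) = {1..k}"
  shows "feasible_sol eps y a b k yt"
  unfolding feasible_sol_def
proof (intro conjI ballI)
  show "infnorm (yt - y) \<le> eps"
    using assms(1) .
  fix i
  assume "i \<in> {1..k}"
  then obtain j where "i \<in> S_set a b k j (yt $ j)"
    using assms(2) by blast
  then show "b i \<le> infnorm (yt - a i)"
    unfolding S_set_def le_infnorm_cart_iff by auto
qed

lemma feasible_sol_in_P_grid:
  assumes "feasible_sol eps y a b k yt"
  shows "\<exists>p\<in>P_grid eps y a b k. feasible_sol eps y a b k p"
proof -
  have "\<bar>yt $ j - y $ j\<bar> \<le> eps" for j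
    using assms component_le_infnorm_cart[of "yt - y" j] unfolding feasible_sol_def by simp
  then have "\<exists>pj\<in>P_coord eps y a b k j. in_closed_cell (breakpoints a b k j) (yt $ j) pj" for j
    by (rule ex_P_coord_in_closed_cell)
  then obtain f where f: "\<And>j. f j \<in> P_coord eps y a b k j"
    and cell: "\<And>j. in_closed_cell (breakpoints a b k j) (yt $ j) (f j)"
    by metis
  define p where "p = (\<chi> j. f j)"
  have "p \<in> P_grid eps y a b k"
    unfolding P_grid_def p_def using f by simp
  moreover have "infnorm (p - y) \<le> eps"
  proof -
    have "0 \<le> eps"
      using assms infnorm_pos_le order_trans unfolding feasible_sol_def by blast
    then have "\<bar>p $ j - y $ j\<bar> \<le> eps" for j
      using subsetD[OF P_coord_subset[OF \<open>0 \<le> eps\<close>] f[of j]] unfolding p_def by auto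
    then show ?thesis
      by (simp add: infnorm_le_cart_iff)
  qed
  moreover have "b i \<le> infnorm (p - a i)" if "i \<in> {1..k}" for i
  proof -
    have "b i \<le> infnorm (yt - a i)"
      using assms that unfolding feasible_sol_def by blast
    then obtain j where "b i \<le> \<bar>yt $ j - a i $ j\<bar>"
      unfolding le_infnorm_cart_iff by auto
    moreover have "a i $ j - b i \<in> breakpoints a b k j" "a i $ j + b i \<in> breakpoints a b k j"
      using that unfolding breakpoints_def by auto
    ultimately have "b i \<le> \<bar>f j - a i $ j\<bar>"
      using in_closed_cell_abs_ge[OF cell] by blast
    then show ?thesis
      unfolding le_infnorm_cart_iff p_def by auto
  qed
  ultimately show ?thesis
    unfolding feasible_sol_def by blast
qed

theorem lemma4:
  fixes eps :: real and y :: "real^'d" and a :: "nat \<Rightarrow> real^'d"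
    and b :: "nat \<Rightarrow> real" and k :: nat
  assumes "eps > 0" and "\<forall>i\<in>{1..k}. b i > 0"
  shows "(\<forall>yt. infnorm (yt - y) \<le> eps \<and> (\<Union>j. S_set a b k j (yt $ j)) = {1..k}
              \<longrightarrow> feasible_sol eps y a b k yt)
       \<and> ((\<exists>yt. feasible_sol eps y a b k yt)
              \<longrightarrow> (\<exists>p\<in>P_grid eps y a b k. feasible_sol eps y a b k p))"
proof (intro conjI allI impI)
  fix yt
  assume "infnorm (yt - y) \<le> eps \<and> (\<Union>j. S_set a b k j (yt $ j)) = {1..k}"
  then show "feasible_sol eps y a b k yt"
    by (metis feasible_sol_if_S_set_cover)
next
  assume "\<exists>yt. feasible_sol eps y a b k yt"
  then show "\<exists>p\<in>P_grid eps y a b k. feasible_sol eps y a b k p"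
    by (metis feasible_sol_in_P_grid)
qed

end
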